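(* Let $k\ge 4$ be even and let $G=(V,E)$ be a $k$-uniform hyperstar of size $d\ge 2$, with $V=[n]$, $E=\{e_1,\ldots,e_d\}$, and heart the vertex $1$. Let $\mathcal L$ be its Laplacian tensor and, for $r=0,1,\ldots,d$, let $f_r(\lambda)=(\lambda-d)(1-\lambda)^{k-1}+r$. Then: (i) A real number $\lambda\neq 1$ is an H-eigenvalue of $\mathcal L$ if and only if it is a real root of $f_r$ for some $r\in\{0,1,\ldots,d\}$. (ii) If $\lambda\neq1$ is a real root of $f_r$, then, up to a nonzero constant multiple, the H-eigenvectors of $\mathcal L$ corresponding to $\lambda$ are exactly the vectors $\mathbf x$ obtained as follows: take $x_1=1-\lambda$; choose any $r$ edges of $G$ and assign to the vertices other than $1$ of these $r$ edges values $\pm1$ such that in each chosen edge the number of vertices assigned $-1$ is even; set $x_j=0$ for all other vertices $j$.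
   Context: A $k$-uniform hyperstar of size $d$ is a hypergraph whose vertex set is a disjoint union $V=V_0\cup V_1\cup\cdots\cup V_d$ with $|V_0|=1$, $|V_1|=\cdots=|V_d|=k-1$, and edge set $\{V_0\cup V_i: i\in[d]\}$; the vertex in $V_0$ is the heart. For a $k$-uniform hypergraph with $d_i$ the number of edges containing $i$, the Laplacian tensor $\mathcal L=\mathcal D-\mathcal A$ ($\mathcal D$ diagonal with entries $d_i$, $\mathcal A$ with entries $\frac1{(k-1)!}$ at index tuples forming an edge and $0$ otherwise) satisfies $(\mathcal L\mathbf x^{k-1})_i=d_ix_i^{k-1}-\sum_{e\in E,\,i\in e}\prod_{s\in e\setminus\{i\}}x_s$. A real $\lambda$ is an H-eigenvalue of $\mathcal L$ with H-eigenvector $\mathbf x\in\mathbb R^n\setminus\{0\}$ if $(\mathcal L\mathbf x^{k-1})_i=\lambda x_i^{k-1}$ for all $i\in[n]$. *)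

theory Defs
  imports Main Complex_Main
begin

definition hyperstar :: "nat \<Rightarrow> nat \<Rightarrow> nat \<Rightarrow> nat set set \<Rightarrow> bool" where
  "hyperstar k d n E \<longleftrightarrow>
     finite E \<and> card E = d \<and>
     (\<forall>e\<in>E. e \<subseteq> {1..n} \<and> card e = k \<and> 1 \<in> e) \<and>
     (\<forall>e\<in>E. \<forall>e'\<in>E. e \<noteq> e' \<longrightarrow> e \<inter> e' = {1}) \<and>
     \<Union>E = {1..n}"

definition hdeg :: "nat set set \<Rightarrow> nat \<Rightarrow> nat" where
  "hdeg E i = card {e\<in>E. i \<in> e}"

text \<open>(L x^{k-1})_i = d_i x_i^{k-1} - sum over edges e containing i of prod_{s in e - {i}} x_s.\<close>
definition laplacian_apply :: "nat \<Rightarrow> nat set set \<Rightarrow> (nat \<Rightarrow> real) \<Rightarrow> nat \<Rightarrow> real" where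
  "laplacian_apply k E x i =
     real (hdeg E i) * x i ^ (k - 1) - (\<Sum>e\<in>{e\<in>E. i \<in> e}. \<Prod>s\<in>e - {i}. x s)"

text \<open>H-eigenvector (vectors in R^n are functions nat => real; only values on {1..n} matter).\<close>
definition H_eigenvector :: "nat \<Rightarrow> nat \<Rightarrow> nat set set \<Rightarrow> real \<Rightarrow> (nat \<Rightarrow> real) \<Rightarrow> bool" where
  "H_eigenvector k n E \<mu> x \<longleftrightarrow>
     (\<exists>i\<in>{1..n}. x i \<noteq> 0) \<and>
     (\<forall>i\<in>{1..n}. laplacian_apply k E x i = \<mu> * x i ^ (k - 1))"

definition H_eigenvalue :: "nat \<Rightarrow> nat \<Rightarrow> nat set set \<Rightarrow> real \<Rightarrow> bool" where
  "H_eigenvalue k n E \<mu> \<longleftrightarrow> (\<exists>x. H_eigenvector k n E \<mu> x)"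

definition f_poly :: "nat \<Rightarrow> nat \<Rightarrow> nat \<Rightarrow> real \<Rightarrow> real" where
  "f_poly k d r \<mu> = (\<mu> - real d) * (1 - \<mu>) ^ (k - 1) + real r"

definition star_vector :: "nat \<Rightarrow> nat set set \<Rightarrow> nat \<Rightarrow> real \<Rightarrow> (nat \<Rightarrow> real) \<Rightarrow> bool" where
  "star_vector n E r \<mu> y \<longleftrightarrow>
     y 1 = 1 - \<mu> \<and>
     (\<exists>S\<subseteq>E. card S = r \<and>
        (\<forall>j\<in>\<Union>S - {1}. y j = 1 \<or> y j = -1) \<and>
        (\<forall>e\<in>S. even (card {j\<in>e - {1}. y j = -1})) \<and>
        (\<forall>j\<in>{1..n} - \<Union>S. j \<noteq> 1 \<longrightarrow> y j = 0))"

end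

theory Submission
  imports Defs
begin

text \<open>
  For an eigenvalue \<mu> \<noteq> 1, the equation at a non-heart vertex j of an edge e reads
  (1 - \<mu>) x_j^(k-1) = x_1 \<cdot> (product of the other non-heart coordinates of e).
  Hence x_1 \<noteq> 0, and after scaling to x_1 = 1 - \<mu> every x_j^k equals the product P_e of all
  non-heart coordinates of e. Multiplying these k - 1 equations gives P_e^k = P_e^(k-1), so
  P_e is 0 or 1: each edge is either identically zero or carries signs \<plusminus>1 with an even
  number of -1; conversely, as k - 1 is odd, every such pattern solves the equations.
  The heart equation then says exactly f_r(\<mu>) = 0, where r = \<Sum>_e P_e is the number of
  signed edges.
\<close>

lemma real_power_eq_1_imp:
  fixes y :: real
  assumes "y ^ m = 1" "0 < m"
  shows "y = 1 \<or> y = -1"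
  using power_eq_1_iff[OF assms(1)] assms(2) by (auto simp: abs_if split: if_splits)

lemma prod_plus_minus_one:
  fixes y :: "'a \<Rightarrow> real"
  assumes "finite A" "\<forall>j\<in>A. y j = 1 \<or> y j = -1"
  shows "prod y A = (-1) ^ card {j\<in>A. y j = -1}"
proof -
  have "prod y A = prod y {j\<in>A. y j = -1} * prod y {j\<in>A. y j \<noteq> -1}"
    using prod.Int_Diff[OF assms(1), of y "{j. y j = -1}"] by (simp add: Int_def set_diff_eq)
  also have "prod y {j\<in>A. y j = -1} = (-1) ^ card {j\<in>A. y j = -1}"
    by (simp add: prod.cong[of _ _ y "\<lambda>_. -1"])
  also have "prod y {j\<in>A. y j \<noteq> -1} = 1"
    using assms(2) by (intro prod.neutral) auto
  finally show ?thesis by simp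
qed

lemma power_card_eq_prod_others_imp:
  fixes y :: "'a \<Rightarrow> real"
  assumes "finite A" and others: "\<forall>j\<in>A. y j ^ card A = (\<Prod>s\<in>A - {j}. y s)"
  shows "(\<forall>j\<in>A. y j = 0) \<or>
         ((\<forall>j\<in>A. y j = 1 \<or> y j = -1) \<and> even (card {j\<in>A. y j = -1}))"
proof -
  define P where "P = prod y A"
  have power_Suc_eq: "y j ^ Suc (card A) = P" if "j \<in> A" for j
    using others that assms(1) by (simp add: P_def prod.remove)
  have "P ^ Suc (card A) = (\<Prod>s\<in>A. y s ^ Suc (card A))"
    unfolding P_def by (rule prod_power_distrib)
  also have "\<dots> = (\<Prod>s\<in>A. P)"
    using power_Suc_eq by (intro prod.cong) auto
  also have "\<dots> = P ^ card A"
    by simp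
  finally have "P ^ card A * (P - 1) = 0"
    by (simp add: algebra_simps)
  then consider "P = 0" | "P = 1"
    by (metis eq_iff_diff_eq_0 mult_eq_0_iff power_eq_0_iff)
  then show ?thesis
  proof cases
    case 1
    then show ?thesis using power_Suc_eq by (metis power_eq_0_iff)
  next
    case 2
    then have plus_minus: "\<forall>j\<in>A. y j = 1 \<or> y j = -1"
      using power_Suc_eq real_power_eq_1_imp by (metis zero_less_Suc)
    then have "(-1::real) ^ card {j\<in>A. y j = -1} = 1"
      using prod_plus_minus_one[OF assms(1)] 2 by (simp add: P_def)
    then have "even (card {j\<in>A. y j = -1})"
      by (metis neg_one_odd_power one_neq_neg_one)
    with plus_minus show ?thesis
      by blast
  qed
qed

lemma prod_others_eq_power_card:
  fixes y :: "'a \<Rightarrow> real"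
  assumes "finite A" "odd (card A)" "2 \<le> card A" "j \<in> A"
    and "(\<forall>j\<in>A. y j = 0) \<or>
         ((\<forall>j\<in>A. y j = 1 \<or> y j = -1) \<and> even (card {j\<in>A. y j = -1}))"
  shows "y j ^ card A = (\<Prod>s\<in>A - {j}. y s)"
  using assms(5)
proof
  assume zero: "\<forall>j\<in>A. y j = 0"
  have "card (A - {j}) = card A - 1"
    using assms(4) by simp
  then have "0 < card (A - {j})"
    using assms(3) by linarith
  then obtain i where "i \<in> A - {j}"
    by (metis card_gt_0_iff ex_in_conv)
  then have "(\<Prod>s\<in>A - {j}. y s) = 0"
    using zero assms(1) by (intro prod_zero) auto
  moreover have "y j ^ card A = 0"
    using zero assms(3,4) by simp
  ultimately show ?thesis
    by simp
next
  assume signed: "(\<forall>j\<in>A. y j = 1 \<or> y j = -1) \<and> even (card {j\<in>A. y j = -1})"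
  have "y j * (\<Prod>s\<in>A - {j}. y s) = prod y A"
    by (rule prod.remove[OF assms(1,4), symmetric])
  also have "\<dots> = 1"
    using signed prod_plus_minus_one[OF assms(1)] by simp
  finally have "y j * (\<Prod>s\<in>A - {j}. y s) = 1" .
  moreover have "y j = 1 \<or> y j = -1"
    using signed assms(4) by blast
  ultimately show ?thesis
    using assms(2) by auto
qed

lemma laplacian_apply_scale:
  assumes uniform: "\<forall>e\<in>E. finite e \<and> card e = k"
    and scaled: "\<forall>j\<in>\<Union>E. x j = c * y j"
  shows "laplacian_apply k E x i = c ^ (k - 1) * laplacian_apply k E y i"
proof (cases "i \<in> \<Union>E")
  case True
  have "(\<Prod>s\<in>e - {i}. x s) = c ^ (k - 1) * (\<Prod>s\<in>e - {i}. y s)" if "e \<in> E" "i \<in> e" for e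
  proof -
    have "(\<Prod>s\<in>e - {i}. x s) = (\<Prod>s\<in>e - {i}. c * y s)"
      using scaled that(1) by (intro prod.cong) auto
    also have "\<dots> = c ^ card (e - {i}) * (\<Prod>s\<in>e - {i}. y s)"
      by (simp add: prod.distrib)
    finally show ?thesis
      using uniform that by simp
  qed
  then have "(\<Sum>e\<in>{e\<in>E. i \<in> e}. \<Prod>s\<in>e - {i}. x s) =
             c ^ (k - 1) * (\<Sum>e\<in>{e\<in>E. i \<in> e}. \<Prod>s\<in>e - {i}. y s)"
    by (simp add: sum_distrib_left)
  moreover have "x i = c * y i"
    using scaled True by blast
  then have "x i ^ (k - 1) = c ^ (k - 1) * y i ^ (k - 1)"
    by (simp add: power_mult_distrib)
  ultimately show ?thesis
    unfolding laplacian_apply_def by (simp add: algebra_simps)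
next
  case False
  then have no_edges: "{e\<in>E. i \<in> e} = {}"
    by blast
  show ?thesis
    unfolding laplacian_apply_def hdeg_def no_edges by simp
qed

lemma f_poly_eq_imp_eq: "f_poly k d r \<mu> = f_poly k d r' \<mu> \<Longrightarrow> r = r'"
  unfolding f_poly_def by simp

definition zero_edge :: "(nat \<Rightarrow> real) \<Rightarrow> nat set \<Rightarrow> bool" where
  "zero_edge y e \<longleftrightarrow> (\<forall>j\<in>e - {1}. y j = 0)"

definition signed_edge :: "(nat \<Rightarrow> real) \<Rightarrow> nat set \<Rightarrow> bool" where
  "signed_edge y e \<longleftrightarrow>
     (\<forall>j\<in>e - {1}. y j = 1 \<or> y j = -1) \<and> even (card {j\<in>e - {1}. y j = -1})"

locale hyperstar_graph =
  fixes k d n :: nat and E :: "nat set set"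
  assumes hyperstar: "hyperstar k d n E"
begin

lemma finite_edges: "finite E"
  and card_edges: "card E = d"
  and edge_subset: "e \<in> E \<Longrightarrow> e \<subseteq> {1..n}"
  and card_edge: "e \<in> E \<Longrightarrow> card e = k"
  and heart_in_edge: "e \<in> E \<Longrightarrow> 1 \<in> e"
  and edges_meet_in_heart: "e \<in> E \<Longrightarrow> e' \<in> E \<Longrightarrow> e \<noteq> e' \<Longrightarrow> e \<inter> e' = {1}"
  and Union_edges: "\<Union>E = {1..n}"
  using hyperstar unfolding hyperstar_def by blast+

lemma finite_edge: "e \<in> E \<Longrightarrow> finite e"
  using edge_subset finite_subset by blast

lemma card_edge_minus_heart: "e \<in> E \<Longrightarrow> card (e - {1}) = k - 1"
  using card_edge heart_in_edge finite_edge by simp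

lemma heart_vertex:
  assumes "0 < d"
  shows "1 \<in> {1..n}"
proof -
  have "E \<noteq> {}"
    using assms card_edges by auto
  then obtain e where "e \<in> E"
    by blast
  then show ?thesis
    using heart_in_edge edge_subset by blast
qed

lemma edges_containing_leaf: "j \<noteq> 1 \<Longrightarrow> j \<in> e \<Longrightarrow> e \<in> E \<Longrightarrow> {e'\<in>E. j \<in> e'} = {e}"
  using edges_meet_in_heart by blast

lemma laplacian_apply_heart:
  "laplacian_apply k E x 1 = real d * x 1 ^ (k - 1) - (\<Sum>e\<in>E. \<Prod>s\<in>e - {1}. x s)"
proof -
  have "{e\<in>E. 1 \<in> e} = E"
    using heart_in_edge by blast
  then show ?thesis
    unfolding laplacian_apply_def hdeg_def using card_edges by simp
qed

lemma laplacian_apply_leaf: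
  assumes "j \<noteq> 1" "j \<in> e" "e \<in> E"
  shows "laplacian_apply k E x j = x j ^ (k - 1) - x 1 * (\<Prod>s\<in>e - {1} - {j}. x s)"
proof -
  have "e - {j} = insert 1 (e - {1} - {j})"
    using assms heart_in_edge by auto
  then have "(\<Prod>s\<in>e - {j}. x s) = x 1 * (\<Prod>s\<in>e - {1} - {j}. x s)"
    using finite_edge[OF assms(3)] by simp
  then show ?thesis
    unfolding laplacian_apply_def hdeg_def edges_containing_leaf[OF assms] by simp
qed

definition eigen_equations :: "real \<Rightarrow> (nat \<Rightarrow> real) \<Rightarrow> bool" where
  "eigen_equations \<mu> x \<longleftrightarrow> (\<forall>i\<in>{1..n}. laplacian_apply k E x i = \<mu> * x i ^ (k - 1))"

lemma H_eigenvector_iff: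
  "H_eigenvector k n E \<mu> x \<longleftrightarrow> (\<exists>i\<in>{1..n}. x i \<noteq> 0) \<and> eigen_equations \<mu> x"
  unfolding H_eigenvector_def eigen_equations_def ..

lemma eigen_equations_iff:
  assumes "0 < d"
  shows "eigen_equations \<mu> x \<longleftrightarrow>
     real d * x 1 ^ (k - 1) - (\<Sum>e\<in>E. \<Prod>s\<in>e - {1}. x s) = \<mu> * x 1 ^ (k - 1) \<and>
     (\<forall>e\<in>E. \<forall>j\<in>e - {1}. x j ^ (k - 1) - x 1 * (\<Prod>s\<in>e - {1} - {j}. x s) = \<mu> * x j ^ (k - 1))"
    (is "_ \<longleftrightarrow> ?heart \<and> (\<forall>e\<in>E. \<forall>j\<in>e - {1}. ?leaf e j)")
proof
  assume eqs: "eigen_equations \<mu> x"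
  have "laplacian_apply k E x 1 = \<mu> * x 1 ^ (k - 1)"
    using eqs heart_vertex[OF assms] unfolding eigen_equations_def by blast
  then have "?heart"
    by (simp only: laplacian_apply_heart)
  moreover have "?leaf e j" if "e \<in> E" "j \<in> e - {1}" for e j
  proof -
    have "j \<in> {1..n}"
      using that edge_subset by blast
    then show ?thesis
      using eqs laplacian_apply_leaf[of j e x] that unfolding eigen_equations_def by auto
  qed
  ultimately show "?heart \<and> (\<forall>e\<in>E. \<forall>j\<in>e - {1}. ?leaf e j)"
    by blast
next
  assume heart_leaves: "?heart \<and> (\<forall>e\<in>E. \<forall>j\<in>e - {1}. ?leaf e j)"
  have "laplacian_apply k E x i = \<mu> * x i ^ (k - 1)" if vertex: "i \<in> {1..n}" for i
  proof (cases "i = 1")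
    case True
    show ?thesis
      unfolding True laplacian_apply_heart by (rule conjunct1[OF heart_leaves])
  next
    case False
    obtain e where "e \<in> E" "i \<in> e"
      using vertex Union_edges by blast
    then have "?leaf e i"
      using conjunct2[OF heart_leaves] False by blast
    then show ?thesis
      unfolding laplacian_apply_leaf[OF False \<open>i \<in> e\<close> \<open>e \<in> E\<close>] .
  qed
  then show "eigen_equations \<mu> x"
    unfolding eigen_equations_def by blast
qed

lemma eigen_equations_scale:
  assumes "c \<noteq> 0" "\<forall>j\<in>{1..n}. x j = c * y j"
  shows "eigen_equations \<mu> x \<longleftrightarrow> eigen_equations \<mu> y"
proof -
  have uniform: "\<forall>e\<in>E. finite e \<and> card e = k"
    using finite_edge card_edge by blast
  have "laplacian_apply k E x i = \<mu> * x i ^ (k - 1) \<longleftrightarrow> laplacian_apply k E y i = \<mu> * y i ^ (k - 1)"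
    if "i \<in> {1..n}" for i
    using laplacian_apply_scale[OF uniform, of x c y i] assms that Union_edges
    by (simp add: power_mult_distrib)
  then show ?thesis
    unfolding eigen_equations_def by blast
qed

lemma leaves_nonempty:
  assumes "2 \<le> k" "e \<in> E"
  shows "e - {1} \<noteq> {}"
proof -
  have "card (e - {1}) \<noteq> 0"
    using card_edge_minus_heart[OF assms(2)] assms(1) by simp
  then show ?thesis
    by (metis card.empty)
qed

lemma heart_nonzero:
  assumes "2 \<le> k" "\<mu> \<noteq> 1" "H_eigenvector k n E \<mu> x"
  shows "x 1 \<noteq> 0"
proof
  assume heart_zero: "x 1 = 0"
  have "x i = 0" if vertex: "i \<in> {1..n}" and leaf: "i \<noteq> 1" for i
  proof -
    obtain e where "e \<in> E" "i \<in> e"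
      using vertex Union_edges by blast
    then have "x i ^ (k - 1) - x 1 * (\<Prod>s\<in>e - {1} - {i}. x s) = \<mu> * x i ^ (k - 1)"
      using assms(3) vertex laplacian_apply_leaf[OF leaf] unfolding H_eigenvector_def by metis
    then have "(1 - \<mu>) * x i ^ (k - 1) = 0"
      using heart_zero by (simp add: algebra_simps)
    then show ?thesis
      using assms(1,2) by simp
  qed
  then show False
    using assms(3) heart_zero unfolding H_eigenvector_def by metis
qed

lemma star_vector_iff:
  assumes "2 \<le> k"
  shows "star_vector n E r \<mu> y \<longleftrightarrow>
           y 1 = 1 - \<mu> \<and> (\<forall>e\<in>E. zero_edge y e \<or> signed_edge y e) \<and>
           card {e\<in>E. signed_edge y e} = r"
proof
  assume "star_vector n E r \<mu> y"
  then obtain S where heart: "y 1 = 1 - \<mu>" and "S \<subseteq> E" "card S = r"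
    and signs: "\<forall>j\<in>\<Union>S - {1}. y j = 1 \<or> y j = -1"
    and parity: "\<forall>e\<in>S. even (card {j\<in>e - {1}. y j = -1})"
    and zeros: "\<forall>j\<in>{1..n} - \<Union>S. j \<noteq> 1 \<longrightarrow> y j = 0"
    unfolding star_vector_def by blast
  have "zero_edge y e" if "e \<in> E" "e \<notin> S" for e
  proof -
    have "j \<notin> \<Union>S" if "j \<in> e - {1}" for j
      using edges_meet_in_heart \<open>e \<in> E\<close> \<open>e \<notin> S\<close> \<open>S \<subseteq> E\<close> that by blast
    then show ?thesis
      unfolding zero_edge_def using zeros edge_subset[OF \<open>e \<in> E\<close>] by blast
  qed
  moreover have "signed_edge y e" if "e \<in> S" for e
    unfolding signed_edge_def using that signs parity by blast
  moreover have "\<not> signed_edge y e" if "e \<in> E" "zero_edge y e" for e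
    using that leaves_nonempty[OF assms] unfolding zero_edge_def signed_edge_def by fastforce
  ultimately have "{e\<in>E. signed_edge y e} = S" "\<forall>e\<in>E. zero_edge y e \<or> signed_edge y e"
    using \<open>S \<subseteq> E\<close> by blast+
  then show "y 1 = 1 - \<mu> \<and> (\<forall>e\<in>E. zero_edge y e \<or> signed_edge y e) \<and>
             card {e\<in>E. signed_edge y e} = r"
    using heart \<open>card S = r\<close> by simp
next
  assume "y 1 = 1 - \<mu> \<and> (\<forall>e\<in>E. zero_edge y e \<or> signed_edge y e) \<and>
          card {e\<in>E. signed_edge y e} = r"
  then have heart: "y 1 = 1 - \<mu>" and edges: "\<forall>e\<in>E. zero_edge y e \<or> signed_edge y e"
    and card_signed: "card {e\<in>E. signed_edge y e} = r"
    by blast+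
  define S where "S = {e\<in>E. signed_edge y e}"
  have "y j = 0" if outside: "j \<in> {1..n} - \<Union>S" and leaf: "j \<noteq> 1" for j
  proof -
    obtain e where "e \<in> E" "j \<in> e"
      using outside Union_edges by blast
    then show ?thesis
      using outside leaf edges unfolding S_def zero_edge_def by blast
  qed
  then show "star_vector n E r \<mu> y"
    unfolding star_vector_def
  proof (intro conjI exI[of _ S])
    show "S \<subseteq> E" "card S = r"
      using card_signed by (auto simp: S_def)
    show "\<forall>j\<in>\<Union>S - {1}. y j = 1 \<or> y j = -1" "\<forall>e\<in>S. even (card {j\<in>e - {1}. y j = -1})"
      unfolding S_def signed_edge_def by blast+
  qed (use heart in blast)+
qed

lemma sum_leaf_products:
  assumes "2 \<le> k" "\<forall>e\<in>E. zero_edge y e \<or> signed_edge y e"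
  shows "(\<Sum>e\<in>E. \<Prod>s\<in>e - {1}. y s) = real (card {e\<in>E. signed_edge y e})"
proof -
  have "(\<Prod>s\<in>e - {1}. y s) = of_bool (signed_edge y e)" if edge: "e \<in> E" for e
  proof (cases "signed_edge y e")
    case True
    then show ?thesis
      using prod_plus_minus_one[of "e - {1}" y] finite_edge[OF edge]
      unfolding signed_edge_def by simp
  next
    case False
    then have "zero_edge y e"
      using assms(2) edge by blast
    moreover obtain j where "j \<in> e - {1}"
      using leaves_nonempty[OF assms(1) edge] by blast
    ultimately have "(\<Prod>s\<in>e - {1}. y s) = 0"
      using finite_edge[OF edge] unfolding zero_edge_def by (intro prod_zero) auto
    then show ?thesis
      using False by simp
  qed
  then have "(\<Sum>e\<in>E. \<Prod>s\<in>e - {1}. y s) = (\<Sum>e\<in>E. of_bool (signed_edge y e))"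
    by (rule sum.cong[OF refl])
  also have "\<dots> = real (card {e\<in>E. signed_edge y e})"
    using finite_edges by (simp add: Int_def conj_commute)
  finally show ?thesis .
qed

lemma star_vector_exists:
  assumes "r \<le> d"
  shows "\<exists>y. star_vector n E r \<mu> y"
proof -
  obtain S where "S \<subseteq> E" "card S = r"
    using assms card_edges obtain_subset_with_card_n by metis
  define y where "y j = (if j = 1 then 1 - \<mu> else if j \<in> \<Union>S then 1 else 0)" for j
  have no_negative: "{j\<in>e - {1}. y j = -1} = {}" for e
    by (auto simp: y_def)
  have "star_vector n E r \<mu> y"
    unfolding star_vector_def
  proof (intro conjI exI[of _ S])
    show "S \<subseteq> E" "card S = r"
      by fact+
    show "\<forall>e\<in>S. even (card {j\<in>e - {1}. y j = -1})"
      unfolding no_negative by simp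
  qed (simp_all add: y_def)
  then show ?thesis
    by blast
qed

context
  assumes k_even: "even k" and k_ge_4: "4 \<le> k" and d_pos: "0 < d"
begin

lemma k_ge_2: "2 \<le> k"
  using k_ge_4 by simp

lemma leaf_equations_iff_edge_type:
  assumes "\<mu> \<noteq> 1" "y 1 = 1 - \<mu>" "e \<in> E"
  shows "(\<forall>j\<in>e - {1}. y j ^ (k - 1) - y 1 * (\<Prod>s\<in>e - {1} - {j}. y s) = \<mu> * y j ^ (k - 1))
         \<longleftrightarrow> zero_edge y e \<or> signed_edge y e"
proof -
  have card_leaves: "card (e - {1}) = k - 1"
    using card_edge_minus_heart[OF assms(3)] .
  have "y j ^ (k - 1) - y 1 * (\<Prod>s\<in>e - {1} - {j}. y s) = \<mu> * y j ^ (k - 1) \<longleftrightarrow>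
        (1 - \<mu>) * (y j ^ card (e - {1}) - (\<Prod>s\<in>e - {1} - {j}. y s)) = 0" for j
    unfolding assms(2) card_leaves by (auto simp: algebra_simps)
  then have "(\<forall>j\<in>e - {1}. y j ^ (k - 1) - y 1 * (\<Prod>s\<in>e - {1} - {j}. y s) = \<mu> * y j ^ (k - 1))
             \<longleftrightarrow> (\<forall>j\<in>e - {1}. y j ^ card (e - {1}) = (\<Prod>s\<in>e - {1} - {j}. y s))"
    using assms(1) by simp
  also have "\<dots> \<longleftrightarrow> zero_edge y e \<or> signed_edge y e"
  proof -
    have finite_leaves: "finite (e - {1})"
      using finite_edge[OF assms(3)] by simp
    have "odd (card (e - {1}))" "2 \<le> card (e - {1})"
      using card_leaves k_even k_ge_4 by simp_all
    then show ?thesis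
      using power_card_eq_prod_others_imp[OF finite_leaves]
        prod_others_eq_power_card[OF finite_leaves]
      unfolding zero_edge_def signed_edge_def by blast
  qed
  finally show ?thesis .
qed

lemma normalized_eigen_equations_iff:
  assumes "\<mu> \<noteq> 1" "y 1 = 1 - \<mu>"
  shows "eigen_equations \<mu> y \<longleftrightarrow>
           (\<forall>e\<in>E. zero_edge y e \<or> signed_edge y e) \<and>
           f_poly k d (card {e\<in>E. signed_edge y e}) \<mu> = 0"
proof -
  have "real d * y 1 ^ (k - 1) - (\<Sum>e\<in>E. \<Prod>s\<in>e - {1}. y s) = \<mu> * y 1 ^ (k - 1) \<longleftrightarrow>
        f_poly k d (card {e\<in>E. signed_edge y e}) \<mu> = 0"
    if "\<forall>e\<in>E. zero_edge y e \<or> signed_edge y e"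
    using k_ge_4 unfolding sum_leaf_products[OF k_ge_2 that] assms(2) f_poly_def
    by (auto simp: algebra_simps)
  then show ?thesis
    using eigen_equations_iff[OF d_pos] leaf_equations_iff_edge_type[of \<mu> y, OF assms] by blast
qed

lemma star_multiple_is_eigenvector:
  assumes "\<mu> \<noteq> 1" "f_poly k d r \<mu> = 0" "c \<noteq> 0" "star_vector n E r \<mu> y"
    and scaled: "\<forall>j\<in>{1..n}. x j = c * y j"
  shows "H_eigenvector k n E \<mu> x"
proof -
  have heart: "y 1 = 1 - \<mu>"
    and "(\<forall>e\<in>E. zero_edge y e \<or> signed_edge y e) \<and> f_poly k d (card {e\<in>E. signed_edge y e}) \<mu> = 0"
    using assms(2,4) star_vector_iff k_ge_4 by auto
  then have "eigen_equations \<mu> x"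
    using normalized_eigen_equations_iff[of \<mu> y, OF assms(1) heart]
      eigen_equations_scale[OF assms(3) scaled]
    by blast
  moreover have "x 1 \<noteq> 0"
    using scaled heart_vertex[OF d_pos] heart assms(1,3) by simp
  ultimately show ?thesis
    unfolding H_eigenvector_iff using heart_vertex[OF d_pos] by blast
qed

lemma eigenvector_normal_form:
  assumes "\<mu> \<noteq> 1" "H_eigenvector k n E \<mu> x"
  obtains c y r where "c \<noteq> 0" "r \<le> d" "f_poly k d r \<mu> = 0" "star_vector n E r \<mu> y"
    "\<forall>j\<in>{1..n}. x j = c * y j"
proof -
  define c where "c = x 1 / (1 - \<mu>)"
  define y where "y j = x j / c" for j
  have "x 1 \<noteq> 0"
    using heart_nonzero k_ge_4 assms by simp
  then have "c \<noteq> 0" and scaled: "\<forall>j\<in>{1..n}. x j = c * y j" and heart: "y 1 = 1 - \<mu>"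
    using assms(1) by (simp_all add: c_def y_def)
  have "eigen_equations \<mu> y"
    using assms(2) eigen_equations_scale[OF \<open>c \<noteq> 0\<close> scaled] unfolding H_eigenvector_iff by blast
  then have edges: "\<forall>e\<in>E. zero_edge y e \<or> signed_edge y e"
    and root: "f_poly k d (card {e\<in>E. signed_edge y e}) \<mu> = 0"
    using normalized_eigen_equations_iff[of \<mu> y, OF assms(1) heart] by blast+
  have "star_vector n E (card {e\<in>E. signed_edge y e}) \<mu> y"
    using star_vector_iff[OF k_ge_2] heart edges by blast
  moreover have "card {e\<in>E. signed_edge y e} \<le> d"
    using card_mono[OF finite_edges] card_edges by fastforce
  ultimately show ?thesis
    using that[OF \<open>c \<noteq> 0\<close> _ root _ scaled] by blast
qed

end

end

theorem proposition5p2: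
  fixes k d n :: nat and E :: "nat set set"
  assumes "even k" and "k \<ge> 4" and "d \<ge> 2"
    and "hyperstar k d n E"
  shows "(\<forall>\<mu>::real. \<mu> \<noteq> 1 \<longrightarrow>
            (H_eigenvalue k n E \<mu> \<longleftrightarrow> (\<exists>r\<in>{0..d}. f_poly k d r \<mu> = 0)))
       \<and> (\<forall>(\<mu>::real) r. \<mu> \<noteq> 1 \<longrightarrow> r \<le> d \<longrightarrow> f_poly k d r \<mu> = 0 \<longrightarrow>
            (\<forall>x. H_eigenvector k n E \<mu> x \<longleftrightarrow>
                 (\<exists>c y. c \<noteq> 0 \<and> star_vector n E r \<mu> y \<and> (\<forall>j\<in>{1..n}. x j = c * y j))))"
proof -
  interpret hyperstar_graph k d n E
    using assms(4) by unfold_locales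
  have d_pos: "0 < d"
    using assms(3) by simp
  note normal_form = eigenvector_normal_form[OF assms(1,2) d_pos]
  note eigenvector = star_multiple_is_eigenvector[OF assms(1,2) d_pos]
  show ?thesis
  proof (intro conjI allI impI iffI)
    fix \<mu> :: real
    assume "\<mu> \<noteq> 1" "H_eigenvalue k n E \<mu>"
    then obtain x where "H_eigenvector k n E \<mu> x"
      unfolding H_eigenvalue_def by blast
    then obtain c y r where "r \<le> d" "f_poly k d r \<mu> = 0"
      by (rule normal_form[OF \<open>\<mu> \<noteq> 1\<close>])
    then show "\<exists>r\<in>{0..d}. f_poly k d r \<mu> = 0"
      by auto
  next
    fix \<mu> :: real
    assume "\<mu> \<noteq> 1" "\<exists>r\<in>{0..d}. f_poly k d r \<mu> = 0"
    then obtain r y where "f_poly k d r \<mu> = 0" "star_vector n E r \<mu> y"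
      using star_vector_exists by fastforce
    then show "H_eigenvalue k n E \<mu>"
      using eigenvector[of \<mu> r 1 y y] \<open>\<mu> \<noteq> 1\<close> unfolding H_eigenvalue_def by auto
  next
    fix \<mu> :: real and r x
    assume "\<mu> \<noteq> 1" "f_poly k d r \<mu> = 0" "H_eigenvector k n E \<mu> x"
    obtain c y r' where "c \<noteq> 0" "f_poly k d r' \<mu> = 0" "star_vector n E r' \<mu> y"
        "\<forall>j\<in>{1..n}. x j = c * y j"
      using normal_form[OF \<open>\<mu> \<noteq> 1\<close> \<open>H_eigenvector k n E \<mu> x\<close>] by metis
    moreover have "r' = r"
      using \<open>f_poly k d r \<mu> = 0\<close> \<open>f_poly k d r' \<mu> = 0\<close> by (intro f_poly_eq_imp_eq[of k d _ \<mu>]) simp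
    ultimately show "\<exists>c y. c \<noteq> 0 \<and> star_vector n E r \<mu> y \<and> (\<forall>j\<in>{1..n}. x j = c * y j)"
      by blast
  next
    fix \<mu> :: real and r x
    assume "\<mu> \<noteq> 1" "f_poly k d r \<mu> = 0"
      "\<exists>c y. c \<noteq> 0 \<and> star_vector n E r \<mu> y \<and> (\<forall>j\<in>{1..n}. x j = c * y j)"
    then show "H_eigenvector k n E \<mu> x"
      using eigenvector by blast
  qed
qed

end
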